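(* Let $\varphi$ be a read-once Boolean formula over the variables $x_1,\dots,x_n$ (each variable occurs exactly once), built from the unary operator $\neg$ and the binary operators $\wedge,\vee,\oplus$, and fix a truth assignment to $x_1,\dots,x_n$. Let $r$ be the root of the parse tree of $\varphi$. Then $\mathrm{DEPENDS}(r)$, defined below, equals the smallest number of variables of $\varphi$ whose values must be changed in order to change the value of $\varphi$.
   Context: The parse tree of $\varphi$ has the variables as leaves and the operator occurrences (gates) as internal nodes; under the fixed assignment every node $g$ has a Boolean value (the value of the subformula rooted at $g$). For an internal node $g$ with $g=g_l\circ g_r$, $\circ\in\{\wedge,\vee,\oplus\}$, define $\mathcal{I}(g)$ as follows, in this order of priority: $\mathcal{I}(g)=\text{Either}$ if negating the value of $g_l$ alone changes the value of $g$ and negating the value of $g_r$ alone changes the value of $g$; otherwise $\mathcal{I}(g)=\text{Left}$ if negating the value of $g_l$ alone changes the value of $g$; otherwise $\mathcal{I}(g)=\text{Right}$ if negating the value of $g_r$ alone changes the value of $g$; otherwise $\mathcal{I}(g)=\text{Both}$ (negating both values changes $g$). For $g=\neg g_l$, $\mathcal{I}(g)=\text{Pass}$. The recursive procedure $\mathrm{DEPENDS}$ assigns to each node $g$ an integer $\mathrm{deps}(g)$ and returns it: if $g$ is a leaf, $\mathrm{deps}(g)=1$; otherwise, with $d_l=\mathrm{DEPENDS}(g_l)$ and $d_r=\mathrm{DEPENDS}(g_r)$ (only $d_l$ when $g=\neg g_l$), $\mathrm{deps}(g)=d_l+d_r$ if $\mathcal{I}(g)=\text{Both}$, $\min\{d_l,d_r\}$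 if Either, $d_l$ if Left, $d_r$ if Right, and $d_l$ if Pass. *)

theory Defs
  imports Main
begin

datatype binop = AndOp | OrOp | XorOp

datatype 'a form = Var 'a | Neg "'a form" | Bin binop "'a form" "'a form"

fun apply_op :: "binop \<Rightarrow> bool \<Rightarrow> bool \<Rightarrow> bool" where
  "apply_op AndOp a b = (a \<and> b)"
| "apply_op OrOp a b = (a \<or> b)"
| "apply_op XorOp a b = (a \<noteq> b)"

fun eval :: "('a \<Rightarrow> bool) \<Rightarrow> 'a form \<Rightarrow> bool" where
  "eval \<sigma> (Var x) = \<sigma> x"
| "eval \<sigma> (Neg f) = (\<not> eval \<sigma> f)"
| "eval \<sigma> (Bin op l r) = apply_op op (eval \<sigma> l) (eval \<sigma> r)"

fun vars :: "'a form \<Rightarrow> 'a list" where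
  "vars (Var x) = [x]"
| "vars (Neg f) = vars f"
| "vars (Bin op l r) = vars l @ vars r"

definition read_once :: "'a form \<Rightarrow> bool" where
  "read_once \<phi> \<longleftrightarrow> distinct (vars \<phi>)"

datatype influence = Either | Left | Right | Both | Pass

definition infl :: "binop \<Rightarrow> bool \<Rightarrow> bool \<Rightarrow> influence" where
  "infl op a b =
    (let cl = (apply_op op (\<not> a) b \<noteq> apply_op op a b);
         cr = (apply_op op a (\<not> b) \<noteq> apply_op op a b)
     in if cl \<and> cr then Either else if cl then Left else if cr then Right else Both)"

fun depends :: "('a \<Rightarrow> bool) \<Rightarrow> 'a form \<Rightarrow> nat" where
  "depends \<sigma> (Var x) = 1"
| "depends \<sigma> (Neg f) = depends \<sigma> f"
| "depends \<sigma> (Bin op l r) =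
    (let dl = depends \<sigma> l; dr = depends \<sigma> r in
     (case infl op (eval \<sigma> l) (eval \<sigma> r) of
        Both \<Rightarrow> dl + dr
      | Either \<Rightarrow> min dl dr
      | Left \<Rightarrow> dl
      | Right \<Rightarrow> dr
      | Pass \<Rightarrow> dl))"

definition flip :: "('a \<Rightarrow> bool) \<Rightarrow> 'a set \<Rightarrow> 'a \<Rightarrow> bool" where
  "flip \<sigma> S = (\<lambda>x. if x \<in> S then \<not> \<sigma> x else \<sigma> x)"

definition min_flip :: "('a \<Rightarrow> bool) \<Rightarrow> 'a form \<Rightarrow> nat" where
  "min_flip \<sigma> \<phi> = (LEAST k. \<exists>S. S \<subseteq> set (vars \<phi>) \<and> card S = k \<and>
                                eval (flip \<sigma> S) \<phi> \<noteq> eval \<sigma> \<phi>)"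

end

theory Submission
  imports Defs
begin

text \<open>Because the formula is read-once, the two children of a
  gate have disjoint variable sets, so a set of flipped variables splits into independent flips
  of the two subformulas whose sizes add up. The influence of the gate tells which children must
  change for the gate to change (both, one specific, or at least one), and which changes suffice;
  so the cheapest change of the gate costs the sum, the cost of that child, or the minimum of the
  two children's costs, which is the recursion of \<open>depends\<close>.\<close>

definition flipping_set :: "('a \<Rightarrow> bool) \<Rightarrow> 'a form \<Rightarrow> 'a set \<Rightarrow> bool" where
  "flipping_set \<sigma> \<phi> S \<longleftrightarrow> S \<subseteq> set (vars \<phi>) \<and> eval (flip \<sigma> S) \<phi> \<noteq> eval \<sigma> \<phi>"

lemma min_flip_eqI:
  assumes "flipping_set \<sigma> \<phi> S" "card S = k"
    and "\<And>T. flipping_set \<sigma> \<phi> T \<Longrightarrow> k \<le> card T"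
  shows "min_flip \<sigma> \<phi> = k"
  unfolding min_flip_def
  by (rule Least_equality) (use assms in \<open>auto simp: flipping_set_def\<close>)

lemma flip_empty [simp]: "flip \<sigma> {} = \<sigma>"
  by (simp add: flip_def)

lemma flipping_set_Neg [simp]: "flipping_set \<sigma> (Neg f) S \<longleftrightarrow> flipping_set \<sigma> f S"
  by (simp add: flipping_set_def)

lemma eval_cong: "(\<And>x. x \<in> set (vars \<phi>) \<Longrightarrow> \<sigma> x = \<tau> x) \<Longrightarrow> eval \<sigma> \<phi> = eval \<tau> \<phi>"
  by (induction \<phi>) auto

lemma eval_flip_Bin_split:
  assumes "set (vars l) \<inter> set (vars r) = {}" "Sl \<subseteq> set (vars l)" "Sr \<subseteq> set (vars r)"
  shows "eval (flip \<sigma> (Sl \<union> Sr)) (Bin op l r) = apply_op op (eval (flip \<sigma> Sl) l) (eval (flip \<sigma> Sr) r)"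
proof -
  have "eval (flip \<sigma> (Sl \<union> Sr)) l = eval (flip \<sigma> Sl) l"
    by (rule eval_cong) (use assms in \<open>auto simp: flip_def\<close>)
  moreover have "eval (flip \<sigma> (Sl \<union> Sr)) r = eval (flip \<sigma> Sr) r"
    by (rule eval_cong) (use assms in \<open>auto simp: flip_def\<close>)
  ultimately show ?thesis by simp
qed

lemma infl_neq_Pass: "infl op a b \<noteq> Pass"
  by (simp add: infl_def Let_def)

lemma apply_op_changes_if_changes_left:
  "infl op a b \<in> {Either, Left} \<Longrightarrow> apply_op op (\<not> a) b \<noteq> apply_op op a b"
  by (cases op; cases a; cases b) (auto simp: infl_def)

lemma apply_op_changes_if_changes_right:
  "infl op a b \<in> {Either, Right} \<Longrightarrow> apply_op op a (\<not> b) \<noteq> apply_op op a b"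
  by (cases op; cases a; cases b) (auto simp: infl_def)

lemma apply_op_changes_if_changes_both:
  "infl op a b = Both \<Longrightarrow> apply_op op (\<not> a) (\<not> b) \<noteq> apply_op op a b"
  by (cases op; cases a; cases b) (auto simp: infl_def)

text \<open>Only a necessary condition: for \<open>Either\<close> at a xor gate, changing both children leaves the gate unchanged.\<close>

lemma apply_op_change_needs:
  assumes "apply_op op a' b' \<noteq> apply_op op a b"
  shows "case infl op a b of
           Either \<Rightarrow> a' \<noteq> a \<or> b' \<noteq> b | Left \<Rightarrow> a' \<noteq> a | Right \<Rightarrow> b' \<noteq> b
         | Both \<Rightarrow> a' \<noteq> a \<and> b' \<noteq> b | Pass \<Rightarrow> False"
  using assms by (cases op; cases a; cases b; cases a'; cases b') (auto simp: infl_def)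

lemma depends_le_flipping_set:
  assumes "read_once \<phi>" "flipping_set \<sigma> \<phi> S"
  shows "depends \<sigma> \<phi> \<le> card S"
  using assms
proof (induction \<phi> arbitrary: S)
  case (Var x)
  then have "S = {x}" by (auto simp: flipping_set_def flip_def split: if_splits)
  then show ?case by simp
next
  case (Neg f)
  then show ?case by (simp add: read_once_def)
next
  case (Bin op l r)
  let ?L = "set (vars l)" and ?R = "set (vars r)"
  let ?Sl = "S \<inter> ?L" and ?Sr = "S \<inter> ?R"
  have ro: "read_once l" "read_once r" and disj: "?L \<inter> ?R = {}"
    using Bin.prems(1) by (auto simp: read_once_def)
  have S: "S = ?Sl \<union> ?Sr" "finite S"
    using Bin.prems(2) by (auto simp: flipping_set_def intro: finite_subset)
  have card_S: "card S = card ?Sl + card ?Sr"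
    by (subst S(1), rule card_Un_disjoint) (use S(2) disj in auto)
  have "apply_op op (eval (flip \<sigma> ?Sl) l) (eval (flip \<sigma> ?Sr) r) \<noteq> apply_op op (eval \<sigma> l) (eval \<sigma> r)"
    using Bin.prems(2) eval_flip_Bin_split[OF disj, of ?Sl ?Sr \<sigma> op] S(1)
    by (simp add: flipping_set_def)
  from apply_op_change_needs[OF this]
  have needs: "case infl op (eval \<sigma> l) (eval \<sigma> r) of
      Either \<Rightarrow> flipping_set \<sigma> l ?Sl \<or> flipping_set \<sigma> r ?Sr
    | Left \<Rightarrow> flipping_set \<sigma> l ?Sl | Right \<Rightarrow> flipping_set \<sigma> r ?Sr
    | Both \<Rightarrow> flipping_set \<sigma> l ?Sl \<and> flipping_set \<sigma> r ?Sr | Pass \<Rightarrow> False"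
    by (simp add: flipping_set_def split: influence.splits)
  show ?case
    using needs Bin.IH(1)[OF ro(1), of ?Sl] Bin.IH(2)[OF ro(2), of ?Sr] card_S
    by (auto simp: Let_def split: influence.splits)
qed

lemma flipping_set_of_card_depends:
  assumes "read_once \<phi>"
  shows "\<exists>S. flipping_set \<sigma> \<phi> S \<and> card S = depends \<sigma> \<phi>"
  using assms
proof (induction \<phi>)
  case (Var x)
  have "flipping_set \<sigma> (Var x) {x}" by (simp add: flipping_set_def flip_def)
  then show ?case by auto
next
  case (Neg f)
  then show ?case by (simp add: read_once_def)
next
  case (Bin op l r)
  let ?a = "eval \<sigma> l" and ?b = "eval \<sigma> r"
  have ro: "read_once l" "read_once r" and disj: "set (vars l) \<inter> set (vars r) = {}"
    using Bin.prems by (auto simp: read_once_def)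
  obtain Sl Sr where Sl: "flipping_set \<sigma> l Sl" "card Sl = depends \<sigma> l"
    and Sr: "flipping_set \<sigma> r Sr" "card Sr = depends \<sigma> r"
    using Bin.IH ro by blast
  have Sl_sub: "Sl \<subseteq> set (vars l)" and Sr_sub: "Sr \<subseteq> set (vars r)"
    using Sl(1) Sr(1) by (auto simp: flipping_set_def)
  have flip_l: "eval (flip \<sigma> Sl) l = (\<not> ?a)" and flip_r: "eval (flip \<sigma> Sr) r = (\<not> ?b)"
    using Sl(1) Sr(1) by (auto simp: flipping_set_def)
  have evals: "eval (flip \<sigma> (Sl \<union> Sr)) (Bin op l r) = apply_op op (\<not> ?a) (\<not> ?b)"
    "eval (flip \<sigma> Sl) (Bin op l r) = apply_op op (\<not> ?a) ?b"
    "eval (flip \<sigma> Sr) (Bin op l r) = apply_op op ?a (\<not> ?b)"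
    using eval_flip_Bin_split[OF disj Sl_sub Sr_sub, of \<sigma> op]
      eval_flip_Bin_split[OF disj Sl_sub empty_subsetI, of \<sigma> op]
      eval_flip_Bin_split[OF disj empty_subsetI Sr_sub, of \<sigma> op]
    by (simp_all add: flip_l flip_r)
  have "infl op ?a ?b \<in> {Either, Left} \<Longrightarrow> flipping_set \<sigma> (Bin op l r) Sl"
    using evals Sl_sub apply_op_changes_if_changes_left by (auto simp: flipping_set_def)
  moreover have "infl op ?a ?b \<in> {Either, Right} \<Longrightarrow> flipping_set \<sigma> (Bin op l r) Sr"
    using evals Sr_sub apply_op_changes_if_changes_right by (auto simp: flipping_set_def)
  moreover have "infl op ?a ?b = Both \<Longrightarrow> flipping_set \<sigma> (Bin op l r) (Sl \<union> Sr)"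
    using evals Sl_sub Sr_sub apply_op_changes_if_changes_both by (auto simp: flipping_set_def)
  moreover have "card (Sl \<union> Sr) = card Sl + card Sr"
    by (rule card_Un_disjoint) (use Sl_sub Sr_sub disj in \<open>auto intro: finite_subset\<close>)
  ultimately show ?case
    using Sl(2) Sr(2) infl_neq_Pass[of op ?a ?b]
    by (cases "infl op ?a ?b"; cases "depends \<sigma> l \<le> depends \<sigma> r") (auto simp: Let_def min_def)
qed

theorem lemma1:
  fixes \<phi> :: "'a form" and \<sigma> :: "'a \<Rightarrow> bool"
  assumes "read_once \<phi>"
  shows "depends \<sigma> \<phi> = min_flip \<sigma> \<phi>"
proof -
  obtain S where "flipping_set \<sigma> \<phi> S" "card S = depends \<sigma> \<phi>"
    using flipping_set_of_card_depends[OF assms] by blast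
  then show ?thesis
    using depends_le_flipping_set[OF assms] by (intro min_flip_eqI[symmetric])
qed

end
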